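(* Let $\lambda\in k$. (i) Suppose $(A,\circ,P,\omega)$ is a Rota–Baxter symplectic Leibniz algebra of weight $\lambda$. Define $\succ,\prec$ on $A$ by $\omega(x\prec y,z)=\omega(x,y\circ z+z\circ y)$ and $\omega(x\succ y,z)=-\omega(y,x\circ z)$ for all $x,y,z$ (these define a Leibniz-dendriform algebra with associated Leibniz algebra $(A,\circ)$). Then $(A,\succ,\prec,P,\omega)$ is a quadratic Rota–Baxter Leibniz-dendriform algebra of weight $\lambda$. (ii) Conversely, if $(A,\succ,\prec,P,\omega)$ is a quadratic Rota–Baxter Leibniz-dendriform algebra of weight $\lambda$, then $(A,\circ,P,\omega)$ with $\circ=\succ+\prec$ is a Rota–Baxter symplectic Leibniz algebra of weight $\lambda$.
   Context: Vector spaces are finite-dimensional over a field $k$. A Leibniz algebra is a vector space with bilinear $\circ$ such that $x\circ(y\circ z)=(x\circ y)\circ z+y\circ(x\circ z)$. A symplectic Leibniz algebra is a Leibniz algebra $(A,\circ)$ with a non-degenerate symmetric bilinear form $\omega$ such that $\omega(z,x\circ y)=-\omega(y,x\circ z)+\omega(x,y\circ z+z\circ y)$ for all $x,y,z$. A Rota–Baxter operator of weight $\lambda$ on $(A,\circ)$ is a linear $P$ with $P(x)\circ P(y)=P(P(x)\circ y+x\circ P(y)+\lambda x\circ y)$; $(A,\circ,P,\omega)$ is a Rota–Baxter symplectic Leibniz algebra of weight $\lambda$ if $(A,\circ,\omega)$ is symplectic, $P$ is a Rota–Baxter operator of weight $\lambda$ and $\omega(P(x),y)+\omega(x,P(y))+\lambda\omega(x,y)=0$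 for all $x,y$. A Leibniz-dendriform algebra is a vector space $A$ with bilinear operations $\succ,\prec$ such that, with $x\circ y:=x\succ y+x\prec y$, for all $x,y,z$: $(x\circ y)\succ z=x\succ(y\succ z)-y\succ(x\succ z)$, $y\prec(x\circ z)+(x\succ y)\prec z=x\succ(y\prec z)$, $x\prec(y\circ z)=(x\prec y)\prec z+y\succ(x\prec z)$. A quadratic Leibniz-dendriform algebra is one with a non-degenerate symmetric bilinear form $\omega$ with $\omega(x\prec y,z)=\omega(x,y\circ z+z\circ y)$ and $\omega(x\succ y,z)=-\omega(y,x\circ z)$ for all $x,y,z$. A Rota–Baxter operator of weight $\lambda$ on $(A,\succ,\prec)$ is a linear $P$ with $P(x)\succ P(y)=P(P(x)\succ y+x\succ P(y)+\lambda x\succ y)$ and $P(x)\prec P(y)=P(P(x)\prec y+x\prec P(y)+\lambda x\prec y)$. $(A,\succ,\prec,P,\omega)$ is a quadratic Rota–Baxter Leibniz-dendriform algebra of weight $\lambda$ if $(A,\succ,\prec,\omega)$ is quadratic, $P$ is a Rota–Baxter operator of weight $\lambda$, and $\omega(P(x),y)+\omega(x,P(y))+\lambda\omega(x,y)=0$ for all $x,y$. *)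

theory Defs
  imports Complex_Main
begin

definition fd_vector_space :: "('k::field \<Rightarrow> 'v::ab_group_add \<Rightarrow> 'v) \<Rightarrow> bool" where
  "fd_vector_space scale \<longleftrightarrow> vector_space scale \<and>
     (\<exists>B. finite B \<and> module.span scale B = UNIV)"

definition bilinear_op :: "('k::field \<Rightarrow> 'v::ab_group_add \<Rightarrow> 'v) \<Rightarrow> ('v \<Rightarrow> 'v \<Rightarrow> 'v) \<Rightarrow> bool" where
  "bilinear_op scale m \<longleftrightarrow> (\<forall>x. Vector_Spaces.linear scale scale (m x))
     \<and> (\<forall>y. Vector_Spaces.linear scale scale (\<lambda>x. m x y))"

definition bilinear_form :: "('k::field \<Rightarrow> 'v::ab_group_add \<Rightarrow> 'v) \<Rightarrow> ('v \<Rightarrow> 'v \<Rightarrow> 'k) \<Rightarrow> bool" where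
  "bilinear_form scale w \<longleftrightarrow> (\<forall>x. Vector_Spaces.linear scale (*) (w x))
     \<and> (\<forall>y. Vector_Spaces.linear scale (*) (\<lambda>x. w x y))"

definition nondeg_sym_form :: "('k::field \<Rightarrow> 'v::ab_group_add \<Rightarrow> 'v) \<Rightarrow> ('v \<Rightarrow> 'v \<Rightarrow> 'k) \<Rightarrow> bool" where
  "nondeg_sym_form scale w \<longleftrightarrow> bilinear_form scale w \<and> (\<forall>x y. w x y = w y x)
     \<and> (\<forall>x. (\<forall>y. w x y = 0) \<longrightarrow> x = 0)"

definition leibniz_algebra :: "('k::field \<Rightarrow> 'v::ab_group_add \<Rightarrow> 'v) \<Rightarrow> ('v \<Rightarrow> 'v \<Rightarrow> 'v) \<Rightarrow> bool" where
  "leibniz_algebra scale m \<longleftrightarrow> bilinear_op scale m \<and>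
     (\<forall>x y z. m x (m y z) = m (m x y) z + m y (m x z))"

definition symplectic_leibniz :: "('k::field \<Rightarrow> 'v::ab_group_add \<Rightarrow> 'v) \<Rightarrow> ('v \<Rightarrow> 'v \<Rightarrow> 'v) \<Rightarrow> ('v \<Rightarrow> 'v \<Rightarrow> 'k) \<Rightarrow> bool" where
  "symplectic_leibniz scale m w \<longleftrightarrow> leibniz_algebra scale m \<and> nondeg_sym_form scale w \<and>
     (\<forall>x y z. w z (m x y) = - w y (m x z) + w x (m y z + m z y))"

definition rota_baxter_op :: "('k::field \<Rightarrow> 'v::ab_group_add \<Rightarrow> 'v) \<Rightarrow> 'k \<Rightarrow> ('v \<Rightarrow> 'v \<Rightarrow> 'v) \<Rightarrow> ('v \<Rightarrow> 'v) \<Rightarrow> bool" where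
  "rota_baxter_op scale lam m P \<longleftrightarrow> Vector_Spaces.linear scale scale P \<and>
     (\<forall>x y. m (P x) (P y) = P (m (P x) y + m x (P y) + scale lam (m x y)))"

definition form_compatible :: "'k::field \<Rightarrow> ('v \<Rightarrow> 'v) \<Rightarrow> ('v \<Rightarrow> 'v \<Rightarrow> 'k) \<Rightarrow> bool" where
  "form_compatible lam P w \<longleftrightarrow> (\<forall>x y. w (P x) y + w x (P y) + lam * w x y = 0)"

definition rb_symplectic_leibniz ::
  "('k::field \<Rightarrow> 'v::ab_group_add \<Rightarrow> 'v) \<Rightarrow> 'k \<Rightarrow> ('v \<Rightarrow> 'v \<Rightarrow> 'v) \<Rightarrow> ('v \<Rightarrow> 'v) \<Rightarrow> ('v \<Rightarrow> 'v \<Rightarrow> 'k) \<Rightarrow> bool" where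
  "rb_symplectic_leibniz scale lam m P w \<longleftrightarrow> symplectic_leibniz scale m w \<and>
     rota_baxter_op scale lam m P \<and> form_compatible lam P w"

definition leibniz_dendriform ::
  "('k::field \<Rightarrow> 'v::ab_group_add \<Rightarrow> 'v) \<Rightarrow> ('v \<Rightarrow> 'v \<Rightarrow> 'v) \<Rightarrow> ('v \<Rightarrow> 'v \<Rightarrow> 'v) \<Rightarrow> bool" where
  "leibniz_dendriform scale sc pr \<longleftrightarrow> bilinear_op scale sc \<and> bilinear_op scale pr \<and>
     (let m = (\<lambda>x y. sc x y + pr x y) in
      (\<forall>x y z. sc (m x y) z = sc x (sc y z) - sc y (sc x z)) \<and>
      (\<forall>x y z. pr y (m x z) + pr (sc x y) z = sc x (pr y z)) \<and>
      (\<forall>x y z. pr x (m y z) = pr (pr x y) z + sc y (pr x z)))"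

definition quadratic_leibniz_dendriform ::
  "('k::field \<Rightarrow> 'v::ab_group_add \<Rightarrow> 'v) \<Rightarrow> ('v \<Rightarrow> 'v \<Rightarrow> 'v) \<Rightarrow> ('v \<Rightarrow> 'v \<Rightarrow> 'v) \<Rightarrow> ('v \<Rightarrow> 'v \<Rightarrow> 'k) \<Rightarrow> bool" where
  "quadratic_leibniz_dendriform scale sc pr w \<longleftrightarrow> leibniz_dendriform scale sc pr \<and>
     nondeg_sym_form scale w \<and>
     (let m = (\<lambda>x y. sc x y + pr x y) in
      (\<forall>x y z. w (pr x y) z = w x (m y z + m z y)) \<and>
      (\<forall>x y z. w (sc x y) z = - w y (m x z)))"

definition quadratic_rb_leibniz_dendriform ::
  "('k::field \<Rightarrow> 'v::ab_group_add \<Rightarrow> 'v) \<Rightarrow> 'k \<Rightarrow> ('v \<Rightarrow> 'v \<Rightarrow> 'v) \<Rightarrow> ('v \<Rightarrow> 'v \<Rightarrow> 'v) \<Rightarrow> ('v \<Rightarrow> 'v) \<Rightarrow> ('v \<Rightarrow> 'v \<Rightarrow> 'k) \<Rightarrow> bool" where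
  "quadratic_rb_leibniz_dendriform scale lam sc pr P w \<longleftrightarrow>
     quadratic_leibniz_dendriform scale sc pr w \<and>
     rota_baxter_op scale lam sc P \<and> rota_baxter_op scale lam pr P \<and> form_compatible lam P w"

end

(*
  Part (ii) is additive: the three Leibniz-dendriform axioms sum to the Leibniz identity of
  x \<circ> y = x \<succ> y + x \<prec> y, the two quadratic conditions sum to the symplectic
  identity, and Rota-Baxter identities for \<succ> and \<prec> sum to one for \<circ>.

  For part (i), nondegeneracy of \<omega> makes \<succ> and \<prec> unique and bilinear, and every
  axiom is checked after pairing with \<omega>, where it becomes an instance of the Leibniz
  identity of \<circ>. The compatibility condition says that the \<omega>-adjoint of P is -P - \<lambda>,
  so pairing with \<omega> turns the Rota-Baxter identity of \<circ> into the one for \<succ>, and the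
  Rota-Baxter identity of the symmetrization x \<circ> y + y \<circ> x into the one for \<prec>.
*)
theory Submission
  imports Defs
begin

lemma bilinear_op_vector_space: "bilinear_op s m \<Longrightarrow> vector_space s"
  unfolding bilinear_op_def Vector_Spaces.linear_iff by blast

lemma bilinear_op_left:
  assumes "bilinear_op s m"
  shows "m (a + b) c = m a c + m b c" "m (s k a) c = s k (m a c)"
    and "m (a - b) c = m a c - m b c" "m (- a) c = - m a c"
proof -
  interpret module_hom s s "\<lambda>x. m x c"
    using assms by (simp add: bilinear_op_def module_hom_iff_linear)
  show "m (a + b) c = m a c + m b c" "m (s k a) c = s k (m a c)"
    and "m (a - b) c = m a c - m b c" "m (- a) c = - m a c"
    by (simp_all add: add scale diff neg)
qed

lemma bilinear_op_right:
  assumes "bilinear_op s m"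
  shows "m c (a + b) = m c a + m c b" "m c (s k a) = s k (m c a)"
    and "m c (a - b) = m c a - m c b" "m c (- a) = - m c a"
proof -
  interpret module_hom s s "m c"
    using assms by (simp add: bilinear_op_def module_hom_iff_linear)
  show "m c (a + b) = m c a + m c b" "m c (s k a) = s k (m c a)"
    and "m c (a - b) = m c a - m c b" "m c (- a) = - m c a"
    by (simp_all add: add scale diff neg)
qed

lemma bilinear_form_left:
  assumes "bilinear_form s w"
  shows "w (a + b) c = w a c + w b c" "w (s k a) c = k * w a c"
    and "w (a - b) c = w a c - w b c" "w (- a) c = - w a c"
proof -
  interpret module_hom s "(*)" "\<lambda>x. w x c"
    using assms by (simp add: bilinear_form_def module_hom_iff_linear)
  show "w (a + b) c = w a c + w b c" "w (s k a) c = k * w a c"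
    and "w (a - b) c = w a c - w b c" "w (- a) c = - w a c"
    by (simp_all add: add scale diff neg)
qed

lemma bilinear_form_right:
  assumes "bilinear_form s w"
  shows "w c (a + b) = w c a + w c b" "w c (s k a) = k * w c a"
    and "w c (a - b) = w c a - w c b" "w c (- a) = - w c a"
proof -
  interpret module_hom s "(*)" "w c"
    using assms by (simp add: bilinear_form_def module_hom_iff_linear)
  show "w c (a + b) = w c a + w c b" "w c (s k a) = k * w c a"
    and "w c (a - b) = w c a - w c b" "w c (- a) = - w c a"
    by (simp_all add: add scale diff neg)
qed

lemma bilinear_op_add:
  assumes "bilinear_op s f" "bilinear_op s g"
  shows "bilinear_op s (\<lambda>x y. f x y + g x y)"
proof -
  interpret vector_space s using bilinear_op_vector_space[OF assms(1)] .
  show ?thesis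
    unfolding bilinear_op_def Vector_Spaces.linear_iff
    by (simp add: vector_space_axioms bilinear_op_left[OF assms(1)] bilinear_op_left[OF assms(2)]
        bilinear_op_right[OF assms(1)] bilinear_op_right[OF assms(2)] algebra_simps)
qed

lemma nondeg_sym_form_bilinear: "nondeg_sym_form s w \<Longrightarrow> bilinear_form s w"
  unfolding nondeg_sym_form_def by blast

lemma nondeg_sym_form_commute: "nondeg_sym_form s w \<Longrightarrow> w a b = w b a"
  unfolding nondeg_sym_form_def by blast

lemma nondeg_sym_form_eqI:
  assumes "nondeg_sym_form s w" "\<And>z. w a z = w b z"
  shows "a = b"
proof -
  have "w (a - b) z = 0" for z
    using assms(2) by (simp add: bilinear_form_left[OF nondeg_sym_form_bilinear[OF assms(1)]])
  then have "a - b = 0"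
    using assms(1) unfolding nondeg_sym_form_def by blast
  then show "a = b" by simp
qed

lemma form_compatible_left:
  "form_compatible lam P w \<Longrightarrow> w (P a) b = - (w a (P b) + lam * w a b)"
  unfolding form_compatible_def by (metis add.assoc eq_neg_iff_add_eq_0)

lemma form_compatible_right:
  "form_compatible lam P w \<Longrightarrow> w a (P b) = - (w (P a) b + lam * w a b)"
  unfolding form_compatible_def by (metis add.assoc add.commute eq_neg_iff_add_eq_0)

lemma rota_baxter_op_linear: "rota_baxter_op s lam m P \<Longrightarrow> Vector_Spaces.linear s s P"
  unfolding rota_baxter_op_def by blast

lemma rota_baxter_op_add:
  assumes f: "rota_baxter_op s lam f P" and g: "rota_baxter_op s lam g P"
  shows "rota_baxter_op s lam (\<lambda>x y. f x y + g x y) P"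
proof -
  interpret Vector_Spaces.linear s s P using rota_baxter_op_linear[OF f] .
  show ?thesis
    using f g unfolding rota_baxter_op_def
    by (simp add: add algebra_simps)
qed

lemma rota_baxter_op_opposite:
  assumes "rota_baxter_op s lam m P"
  shows "rota_baxter_op s lam (\<lambda>x y. m y x) P"
  using assms unfolding rota_baxter_op_def by (simp add: add.commute)

lemma leibniz_algebra_left_skew:
  assumes "leibniz_algebra s m"
  shows "m (m a b) c = - m (m b a) c"
proof -
  have bil: "bilinear_op s m" and leib: "\<And>x y z. m x (m y z) = m (m x y) z + m y (m x z)"
    using assms unfolding leibniz_algebra_def by blast+
  have square: "m (m x x) c = 0" for x
    using leib[of x x c] by simp
  have "m (m (a + b) (a + b)) c = 0" by (rule square)
  then have "m (m a b) c + m (m b a) c = 0"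
    by (simp add: bilinear_op_left[OF bil] bilinear_op_right[OF bil] square add.commute)
  then show ?thesis by (simp add: eq_neg_iff_add_eq_0)
qed

lemma leibniz_dendriform_imp_leibniz_algebra:
  assumes "leibniz_dendriform s sc pr"
  shows "leibniz_algebra s (\<lambda>x y. sc x y + pr x y)"
proof -
  have bsc: "bilinear_op s sc" and bpr: "bilinear_op s pr"
    and succ_succ: "\<And>x y z. sc (sc x y + pr x y) z = sc x (sc y z) - sc y (sc x z)"
    and prec_succ: "\<And>x y z. pr y (sc x z + pr x z) + pr (sc x y) z = sc x (pr y z)"
    and prec_prec: "\<And>x y z. pr x (sc y z + pr y z) = pr (pr x y) z + sc y (pr x z)"
    using assms unfolding leibniz_dendriform_def Let_def by auto
  let ?m = "\<lambda>x y. sc x y + pr x y"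
  have "?m x (?m y z) = ?m (?m x y) z + ?m y (?m x z)" for x y z
  proof -
    have "?m x (?m y z) = sc x (sc y z) + sc x (pr y z) + pr x (?m y z)"
      by (simp add: bilinear_op_right[OF bsc])
    also have "\<dots> = sc x (sc y z) + (pr y (?m x z) + pr (sc x y) z)
                      + (pr (pr x y) z + sc y (pr x z))"
      by (simp only: prec_succ[where x = x and y = y and z = z, symmetric] prec_prec[of x y z])
    also have "\<dots> = (sc x (sc y z) - sc y (sc x z)) + (pr (sc x y) z + pr (pr x y) z)
                      + (sc y (sc x z) + sc y (pr x z) + pr y (?m x z))"
      by (simp add: algebra_simps)
    also have "\<dots> = ?m (?m x y) z + ?m y (?m x z)"
      by (simp only: succ_succ bilinear_op_left[OF bpr] bilinear_op_right[OF bsc])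
    finally show ?thesis .
  qed
  then show ?thesis
    unfolding leibniz_algebra_def using bilinear_op_add[OF bsc bpr] by blast
qed

lemma quadratic_leibniz_dendriform_imp_symplectic_leibniz:
  assumes "quadratic_leibniz_dendriform s sc pr w"
  shows "symplectic_leibniz s (\<lambda>x y. sc x y + pr x y) w"
proof -
  let ?m = "\<lambda>x y. sc x y + pr x y"
  have nd: "nondeg_sym_form s w" and ld: "leibniz_dendriform s sc pr"
    and form_prec: "\<And>x y z. w (pr x y) z = w x (?m y z + ?m z y)"
    and form_succ: "\<And>x y z. w (sc x y) z = - w y (?m x z)"
    using assms unfolding quadratic_leibniz_dendriform_def Let_def by auto
  have "w z (?m x y) = - w y (?m x z) + w x (?m y z + ?m z y)" for x y z
  proof -
    have "w z (?m x y) = w (sc x y) z + w (pr x y) z"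
      by (simp add: nondeg_sym_form_commute[OF nd, of z]
          bilinear_form_left[OF nondeg_sym_form_bilinear[OF nd]])
    then show ?thesis by (simp only: form_succ form_prec)
  qed
  then show ?thesis
    unfolding symplectic_leibniz_def using leibniz_dendriform_imp_leibniz_algebra[OF ld] nd by blast
qed

lemma quadratic_rb_leibniz_dendriform_imp_rb_symplectic_leibniz:
  assumes "quadratic_rb_leibniz_dendriform s lam sc pr P w"
  shows "rb_symplectic_leibniz s lam (\<lambda>x y. sc x y + pr x y) P w"
  using assms quadratic_leibniz_dendriform_imp_symplectic_leibniz rota_baxter_op_add
  unfolding quadratic_rb_leibniz_dendriform_def rb_symplectic_leibniz_def by blast

locale induced_leibniz_dendriform =
  fixes scale :: "'k::field \<Rightarrow> 'v::ab_group_add \<Rightarrow> 'v" and m :: "'v \<Rightarrow> 'v \<Rightarrow> 'v"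
    and w :: "'v \<Rightarrow> 'v \<Rightarrow> 'k" and sc pr :: "'v \<Rightarrow> 'v \<Rightarrow> 'v"
  assumes symplectic: "symplectic_leibniz scale m w"
    and form_prec: "w (pr x y) z = w x (m y z + m z y)"
    and form_succ: "w (sc x y) z = - w y (m x z)"
begin

lemma leibniz_algebra: "leibniz_algebra scale m"
  using symplectic unfolding symplectic_leibniz_def by blast

lemma bilinear_mult: "bilinear_op scale m"
  using leibniz_algebra unfolding leibniz_algebra_def by blast

lemma leibniz: "m x (m y z) = m (m x y) z + m y (m x z)"
  using leibniz_algebra unfolding leibniz_algebra_def by blast

lemma nondeg: "nondeg_sym_form scale w"
  using symplectic unfolding symplectic_leibniz_def by blast

lemma invariant: "w z (m x y) = - w y (m x z) + w x (m y z + m z y)"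
  using symplectic unfolding symplectic_leibniz_def by blast

lemmas mult_left = bilinear_op_left[OF bilinear_mult]
  and mult_right = bilinear_op_right[OF bilinear_mult]
  and form_left = bilinear_form_left[OF nondeg_sym_form_bilinear[OF nondeg]]
  and form_right = bilinear_form_right[OF nondeg_sym_form_bilinear[OF nondeg]]
  and form_eqI = nondeg_sym_form_eqI[OF nondeg]

lemma mult_eq_succ_plus_prec: "m x y = sc x y + pr x y"
proof (rule form_eqI)
  fix z
  have "w (m x y) z = w z (m x y)" by (rule nondeg_sym_form_commute[OF nondeg])
  also have "\<dots> = - w y (m x z) + w x (m y z + m z y)" by (rule invariant)
  also have "\<dots> = w (sc x y + pr x y) z" by (simp only: form_left form_succ form_prec)
  finally show "w (m x y) z = w (sc x y + pr x y) z" .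
qed

lemma bilinear_succ: "bilinear_op scale sc"
  unfolding bilinear_op_def Vector_Spaces.linear_iff
  by (auto intro!: form_eqI bilinear_op_vector_space[OF bilinear_mult]
      simp: form_left form_right mult_left mult_right form_succ algebra_simps)

lemma bilinear_prec: "bilinear_op scale pr"
  unfolding bilinear_op_def Vector_Spaces.linear_iff
  by (auto intro!: form_eqI bilinear_op_vector_space[OF bilinear_mult]
      simp: form_left form_right mult_left mult_right form_prec algebra_simps)

lemma leibniz_dendriform: "leibniz_dendriform scale sc pr"
proof -
  have succ_succ: "sc (m x y) z = sc x (sc y z) - sc y (sc x z)" for x y z
  proof (rule form_eqI)
    fix u
    show "w (sc (m x y) z) u = w (sc x (sc y z) - sc y (sc x z)) u"
      using leibniz[of x y u] by (simp add: form_left form_right form_succ algebra_simps)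
  qed
  have prec_succ: "pr y (m x z) + pr (sc x y) z = sc x (pr y z)" for x y z
  proof (rule form_eqI)
    fix u
    show "w (pr y (m x z) + pr (sc x y) z) u = w (sc x (pr y z)) u"
      using leibniz[of x z u] leibniz[of x u z]
      by (simp add: form_left form_right mult_right form_succ form_prec algebra_simps)
  qed
  have prec_prec: "pr x (m y z) = pr (pr x y) z + sc y (pr x z)" for x y z
  proof (rule form_eqI)
    fix u
    show "w (pr x (m y z)) u = w (pr (pr x y) z + sc y (pr x z)) u"
      using leibniz[of y z u] leibniz[of y u z] leibniz_algebra_left_skew[OF leibniz_algebra, of z u y]
      by (simp add: form_left form_right mult_right form_succ form_prec algebra_simps)
  qed
  show ?thesis
    unfolding leibniz_dendriform_def Let_def mult_eq_succ_plus_prec[symmetric]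
    using bilinear_succ bilinear_prec succ_succ prec_succ prec_prec by blast
qed

lemma quadratic_leibniz_dendriform: "quadratic_leibniz_dendriform scale sc pr w"
  unfolding quadratic_leibniz_dendriform_def Let_def mult_eq_succ_plus_prec[symmetric]
  using leibniz_dendriform nondeg form_prec form_succ by blast

context
  fixes lam :: 'k and P :: "'v \<Rightarrow> 'v"
  assumes rota_baxter: "rota_baxter_op scale lam m P"
    and compatible: "form_compatible lam P w"
begin

lemma rota_baxter_mult: "m (P x) (P y) = P (m (P x) y + m x (P y) + scale lam (m x y))"
  using rota_baxter unfolding rota_baxter_op_def by blast

lemmas compatible_left = form_compatible_left[OF compatible]
  and compatible_right = form_compatible_right[OF compatible]

lemma rota_baxter_succ: "rota_baxter_op scale lam sc P"
proof -
  have "sc (P x) (P y) = P (sc (P x) y + sc x (P y) + scale lam (sc x y))" for x y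
  proof (rule form_eqI)
    fix u
    let ?Q = "sc (P x) y + sc x (P y) + scale lam (sc x y)"
    have pair_Q: "w ?Q v = - w y (m (P x) v) - w (P y) (m x v) - lam * w y (m x v)" for v
      by (simp add: form_left form_succ)
    have pair_rb: "w y (m (P x) (P u))
        = - w (P y) (m (P x) u + m x (P u) + scale lam (m x u))
          - lam * w y (m (P x) u + m x (P u) + scale lam (m x u))"
      by (simp add: rota_baxter_mult compatible_right)
    have "w (P ?Q) u = - (w ?Q (P u) + lam * w ?Q u)" by (rule compatible_left)
    also have "\<dots> = - w (P y) (m (P x) u)"
      by (simp only: pair_Q pair_rb) (simp add: form_right algebra_simps)
    also have "\<dots> = w (sc (P x) (P y)) u" by (simp add: form_succ)
    finally show "w (sc (P x) (P y)) u = w (P ?Q) u" ..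
  qed
  then show ?thesis
    using rota_baxter unfolding rota_baxter_op_def by blast
qed

lemma rota_baxter_prec: "rota_baxter_op scale lam pr P"
proof -
  let ?s = "\<lambda>a b. m a b + m b a"
  have rota_baxter_sym: "?s (P x) (P y) = P (?s (P x) y + ?s x (P y) + scale lam (?s x y))" for x y
    using rota_baxter_op_add[OF rota_baxter rota_baxter_op_opposite[OF rota_baxter]]
    unfolding rota_baxter_op_def by (simp add: algebra_simps)
  have "pr (P x) (P y) = P (pr (P x) y + pr x (P y) + scale lam (pr x y))" for x y
  proof (rule form_eqI)
    fix u
    let ?Q = "pr (P x) y + pr x (P y) + scale lam (pr x y)"
    have pair_Q: "w ?Q v = w (P x) (?s y v) + w x (?s (P y) v) + lam * w x (?s y v)" for v
      by (simp add: form_left form_prec)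
    have pair_rb: "w x (?s (P y) (P u))
        = - w (P x) (?s (P y) u + ?s y (P u) + scale lam (?s y u))
          - lam * w x (?s (P y) u + ?s y (P u) + scale lam (?s y u))"
      by (simp only: rota_baxter_sym compatible_right) (simp add: algebra_simps)
    have "w (P ?Q) u = - (w ?Q (P u) + lam * w ?Q u)" by (rule compatible_left)
    also have "\<dots> = w (P x) (?s (P y) u)"
      by (simp only: pair_Q pair_rb) (simp add: form_right algebra_simps)
    also have "\<dots> = w (pr (P x) (P y)) u" by (simp add: form_prec)
    finally show "w (pr (P x) (P y)) u = w (P ?Q) u" ..
  qed
  then show ?thesis
    using rota_baxter unfolding rota_baxter_op_def by blast
qed

lemma quadratic_rb_leibniz_dendriform: "quadratic_rb_leibniz_dendriform scale lam sc pr P w"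
  unfolding quadratic_rb_leibniz_dendriform_def
  using quadratic_leibniz_dendriform rota_baxter_succ rota_baxter_prec compatible by blast

end

end

theorem mainTheorem14:
  fixes scale :: "'k::field \<Rightarrow> 'v::ab_group_add \<Rightarrow> 'v" and lam :: 'k
  assumes fd: "fd_vector_space scale"
  shows "(\<forall>(m::'v \<Rightarrow> 'v \<Rightarrow> 'v) P (w::'v \<Rightarrow> 'v \<Rightarrow> 'k) sc pr.
            rb_symplectic_leibniz scale lam m P w
            \<and> (\<forall>x y z. w (pr x y) z = w x (m y z + m z y))
            \<and> (\<forall>x y z. w (sc x y) z = - w y (m x z))
          \<longrightarrow> quadratic_rb_leibniz_dendriform scale lam sc pr P w
              \<and> (\<forall>x y. m x y = sc x y + pr x y))
       \<and> (\<forall>sc pr (P::'v \<Rightarrow> 'v) (w::'v \<Rightarrow> 'v \<Rightarrow> 'k).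
            quadratic_rb_leibniz_dendriform scale lam sc pr P w
          \<longrightarrow> rb_symplectic_leibniz scale lam (\<lambda>x y. sc x y + pr x y) P w)"
proof (rule conjI; intro allI impI)
  fix m P w sc pr
  assume "rb_symplectic_leibniz scale lam m P w
    \<and> (\<forall>x y z. w (pr x y) z = w x (m y z + m z y)) \<and> (\<forall>x y z. w (sc x y) z = - w y (m x z))"
  then have induced: "induced_leibniz_dendriform scale m w sc pr"
    and rb: "rota_baxter_op scale lam m P" and compatible: "form_compatible lam P w"
    unfolding induced_leibniz_dendriform_def rb_symplectic_leibniz_def by blast+
  show "quadratic_rb_leibniz_dendriform scale lam sc pr P w \<and> (\<forall>x y. m x y = sc x y + pr x y)"
    using induced_leibniz_dendriform.quadratic_rb_leibniz_dendriform[OF induced rb compatible]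
      induced_leibniz_dendriform.mult_eq_succ_plus_prec[OF induced] by blast
next
  fix sc pr P w
  assume "quadratic_rb_leibniz_dendriform scale lam sc pr P w"
  then show "rb_symplectic_leibniz scale lam (\<lambda>x y. sc x y + pr x y) P w"
    by (rule quadratic_rb_leibniz_dendriform_imp_rb_symplectic_leibniz)
qed

end
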